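(* Let $n \ge 1$ and let $L$ be an $n \times n$ Latin square with rows, columns and symbols indexed by $\{0,1,\dots,n-1\}$. Then $$\sum_{0 \le r_1 < r_2 \le n-1} d(r_1,r_2) = \frac{n^2(n^2-1)}{6},$$ where $d(r_1,r_2) = \sum_{s=0}^{n-1} \lvert \mathrm{pos}(r_1,s) - \mathrm{pos}(r_2,s) \rvert$.
   Context: An $n \times n$ Latin square is an $n\times n$ array with entries in $\{0,\dots,n-1\}$ in which each symbol occurs exactly once in each row and exactly once in each column. Rows and columns are indexed by $\{0,\dots,n-1\}$. For a row $r$ and a symbol $s$, $\mathrm{pos}(r,s) \in \{0,\dots,n-1\}$ denotes the column in which symbol $s$ appears in row $r$. The absolute value $\lvert \mathrm{pos}(r_1,s) - \mathrm{pos}(r_2,s)\rvert$ is taken as ordinary integers. *)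

theory Defs
  imports Complex_Main
begin

definition latin_square :: "nat \<Rightarrow> (nat \<Rightarrow> nat \<Rightarrow> nat) \<Rightarrow> bool" where
  "latin_square n L \<longleftrightarrow>
     (\<forall>r<n. \<forall>c<n. L r c < n) \<and>
     (\<forall>r<n. \<forall>s<n. \<exists>!c. c < n \<and> L r c = s) \<and>
     (\<forall>c<n. \<forall>s<n. \<exists>!r. r < n \<and> L r c = s)"

definition pos :: "nat \<Rightarrow> (nat \<Rightarrow> nat \<Rightarrow> nat) \<Rightarrow> nat \<Rightarrow> nat \<Rightarrow> nat" where
  "pos n L r s = (THE c. c < n \<and> L r c = s)"

definition row_dist :: "nat \<Rightarrow> (nat \<Rightarrow> nat \<Rightarrow> nat) \<Rightarrow> nat \<Rightarrow> nat \<Rightarrow> int" where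
  "row_dist n L r1 r2 = (\<Sum>s<n. \<bar>int (pos n L r1 s) - int (pos n L r2 s)\<bar>)"

end

theory Submission
  imports Defs
begin

(* For a fixed symbol s, the map r \<mapsto> pos(r, s) is a permutation of {0..n-1}, because s occurs
   exactly once in every column.  Hence the contribution of s to the sum is the sum of |a - b|
   over all pairs a < b of {0..n-1}, which is (n-1) n (n+1) / 6, independently of the square;
   summing over the n symbols gives n^2 (n^2 - 1) / 6. *)

lemma sum_less_pairs_symmetric:
  fixes f :: "nat \<Rightarrow> nat \<Rightarrow> 'a::semiring_1"
  assumes sym: "\<And>a b. f a b = f b a" and diag: "\<And>a. f a a = 0"
  shows "2 * (\<Sum>(a, b) \<in> {(a, b). a < b \<and> b < n}. f a b) = (\<Sum>a<n. \<Sum>b<n. f a b)"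
proof -
  let ?P = "{(a, b). a < b \<and> b < n}"
  let ?Q = "{(a, b). b < a \<and> a < n}"
  let ?D = "{(a, b). a = b \<and> a < n}"
  have partition: "{..<n} \<times> {..<n} = ?P \<union> ?Q \<union> ?D" by auto
  have finite_parts: "finite ?P" "finite ?Q" "finite ?D"
    by (rule finite_subset[of _ "{..<n} \<times> {..<n}"]; auto)+
  have swap: "?Q = prod.swap ` ?P" by auto
  have "(\<Sum>a<n. \<Sum>b<n. f a b) = (\<Sum>x\<in>{..<n} \<times> {..<n}. case_prod f x)"
    by (simp add: sum.cartesian_product)
  also have "\<dots> = (\<Sum>x\<in>?P. case_prod f x) + (\<Sum>x\<in>?Q. case_prod f x) + (\<Sum>x\<in>?D. case_prod f x)"
    unfolding partition using finite_parts by (subst sum.union_disjoint; auto)+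
  also have "(\<Sum>x\<in>?Q. case_prod f x) = (\<Sum>x\<in>?P. case_prod f x)"
    unfolding swap by (subst sum.reindex) (auto intro!: sum.cong simp: sym)
  also have "(\<Sum>x\<in>?D. case_prod f x) = 0"
    by (rule sum.neutral) (auto simp: diag)
  finally show ?thesis by (simp add: mult_2)
qed

lemma double_sum_reindex_bij_betw:
  assumes "bij_betw p {..<n} {..<n}"
  shows "(\<Sum>a<n. \<Sum>b<n. g (p a) (p b)) = (\<Sum>a<n. \<Sum>b<n. g a b)"
proof -
  have "(\<Sum>a<n. \<Sum>b<n. g (p a) (p b)) = (\<Sum>a<n. \<Sum>b<n. g (p a) b)"
    by (intro sum.cong refl sum.reindex_bij_betw[OF assms])
  also have "\<dots> = (\<Sum>a<n. \<Sum>b<n. g a b)"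
    by (rule sum.reindex_bij_betw[OF assms])
  finally show ?thesis .
qed

lemma double_sum_abs_diff_to_bound:
  "2 * (\<Sum>b<n. \<bar>int n - int b\<bar>) = int n * (int n + 1)"
proof (induction n)
  case (Suc n)
  have "(\<Sum>b<Suc n. \<bar>int (Suc n) - int b\<bar>) = (\<Sum>b<n. \<bar>int n - int b\<bar> + 1) + 1"
    by (auto intro!: sum.cong)
  also have "\<dots> = (\<Sum>b<n. \<bar>int n - int b\<bar>) + int n + 1"
    by (simp add: sum.distrib)
  finally show ?case
    using Suc.IH by (simp add: algebra_simps)
qed simp

lemma triple_sum_abs_diff_lessThan:
  "3 * (\<Sum>a<n. \<Sum>b<n. \<bar>int a - int b\<bar>) = (int n - 1) * int n * (int n + 1)"
proof (induction n)
  case (Suc n)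
  have "(\<Sum>a<Suc n. \<Sum>b<Suc n. \<bar>int a - int b\<bar>)
      = (\<Sum>a<n. \<Sum>b<n. \<bar>int a - int b\<bar>) + (\<Sum>a<n. \<bar>int a - int n\<bar>) + (\<Sum>b<n. \<bar>int n - int b\<bar>)"
    by (simp add: sum.distrib)
  also have "(\<Sum>a<n. \<bar>int a - int n\<bar>) = (\<Sum>b<n. \<bar>int n - int b\<bar>)"
    by (simp only: abs_minus_commute)
  finally show ?case
    using Suc.IH double_sum_abs_diff_to_bound[of n] by (simp add: algebra_simps)
qed simp

lemma sum_less_pairs_abs_diff_bij_betw:
  assumes "bij_betw p {..<n} {..<n}"
  shows "6 * (\<Sum>(a, b) \<in> {(a, b). a < b \<and> b < n}. \<bar>int (p a) - int (p b)\<bar>)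
           = (int n - 1) * int n * (int n + 1)"
proof -
  have "2 * (\<Sum>(a, b) \<in> {(a, b). a < b \<and> b < n}. \<bar>int (p a) - int (p b)\<bar>)
      = (\<Sum>a<n. \<Sum>b<n. \<bar>int (p a) - int (p b)\<bar>)"
    by (rule sum_less_pairs_symmetric) (simp_all add: abs_minus_commute)
  also have "\<dots> = (\<Sum>a<n. \<Sum>b<n. \<bar>int a - int b\<bar>)"
    using double_sum_reindex_bij_betw[OF assms, of "\<lambda>a b. \<bar>int a - int b\<bar>"] .
  finally show ?thesis
    using triple_sum_abs_diff_lessThan[of n] by simp
qed

lemma latin_square_pos:
  assumes "latin_square n L" "r < n" "s < n"
  shows "pos n L r s < n" "L r (pos n L r s) = s"
  using theI'[of "\<lambda>c. c < n \<and> L r c = s"] assms unfolding latin_square_def pos_def by auto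

lemma latin_square_pos_bij_betw:
  assumes L: "latin_square n L" and s: "s < n"
  shows "bij_betw (\<lambda>r. pos n L r s) {..<n} {..<n}"
proof -
  have inj: "inj_on (\<lambda>r. pos n L r s) {..<n}"
  proof (rule inj_onI)
    fix r1 r2
    assume r: "r1 \<in> {..<n}" "r2 \<in> {..<n}" and eq: "pos n L r1 s = pos n L r2 s"
    let ?c = "pos n L r1 s"
    have c: "?c < n" and "L r1 ?c = s"
      using latin_square_pos[OF L _ s] r by auto
    moreover have "L r2 ?c = s"
      unfolding eq using latin_square_pos(2)[OF L _ s] r by auto
    moreover have "\<exists>!r. r < n \<and> L r ?c = s"
      using L c s unfolding latin_square_def by simp
    ultimately show "r1 = r2"
      using r by blast
  qed
  moreover have "(\<lambda>r. pos n L r s) ` {..<n} \<subseteq> {..<n}"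
    using latin_square_pos(1)[OF L _ s] by auto
  ultimately show ?thesis
    by (simp add: bij_betw_def endo_inj_surj)
qed

theorem lemma1:
  fixes n :: nat and L :: "nat \<Rightarrow> nat \<Rightarrow> nat"
  assumes "n \<ge> 1" and "latin_square n L"
  shows "real_of_int (\<Sum>(r1, r2) \<in> {(r1, r2). r1 < r2 \<and> r2 < n}. row_dist n L r1 r2)
           = real (n ^ 2 * (n ^ 2 - 1)) / 6"
proof -
  let ?P = "{(r1, r2). r1 < r2 \<and> r2 < n}"
  have "6 * (\<Sum>(r1, r2) \<in> ?P. row_dist n L r1 r2)
      = (\<Sum>s<n. 6 * (\<Sum>(r1, r2) \<in> ?P. \<bar>int (pos n L r1 s) - int (pos n L r2 s)\<bar>))"
    unfolding row_dist_def case_prod_beta sum_distrib_left by (rule sum.swap)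
  also have "\<dots> = (\<Sum>s<n. (int n - 1) * int n * (int n + 1))"
    using sum_less_pairs_abs_diff_bij_betw[OF latin_square_pos_bij_betw[OF assms(2)]]
    by (intro sum.cong) auto
  also have "\<dots> = int (n ^ 2 * (n ^ 2 - 1))"
    using assms(1) by (simp add: of_nat_diff algebra_simps power2_eq_square)
  finally have "real_of_int (6 * (\<Sum>(r1, r2) \<in> ?P. row_dist n L r1 r2))
      = real_of_int (int (n ^ 2 * (n ^ 2 - 1)))"
    by (rule arg_cong)
  then show ?thesis by simp
qed

end
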